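(* Let $V,V'$ be finite-dimensional complex vector spaces, $G\subset GL(V)$, $G'\subset GL(V')$ finite, and $F:V\to V'$ a holomorphic diffeomorphism mapping $G$-orbits onto $G'$-orbits. Let $f:Z=V/G\to Z'=V'/G'$ be the induced holomorphic diffeomorphism of orbit spaces. Then $f$ maps the isotropy type stratification of $Z$ onto that of $Z'$, and $f_*(D_Z)=D_{Z'}$.
   Context: Orbit spaces $V/G$ carry the quotient topology and the sheaf of $G$-invariant holomorphic functions; a holomorphic diffeomorphism of orbit spaces is an isomorphism of these locally ringed spaces. Isotropy type stratification: strata $Z_{(K)}=\pi(V_{(K)})$ where $V_{(K)}$ is the set of points whose isotropy group is conjugate to $K\subset G$. Reflection divisor: for each reflection hyperplane $H$ (fixed hyperplane of a complex reflection in $G$) let $e_H$ be the order of its pointwise stabiliser in $G$; $D_Z=\sum_S e_S\cdot S$, summed over the distinct hypersurfaces $S=\pi(H)$, with $e_S:=e_H$ (independent of $H$). *)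

theory Defs
  imports "HOL-Analysis.Analysis"
begin

definition finite_linear_group :: "(complex^'n^'n) set \<Rightarrow> bool" where
  "finite_linear_group G \<longleftrightarrow> finite G \<and> mat 1 \<in> G \<and>
     (\<forall>A\<in>G. invertible A \<and> matrix_inv A \<in> G) \<and> (\<forall>A\<in>G. \<forall>B\<in>G. A ** B \<in> G)"

definition orbit :: "(complex^'n^'n) set \<Rightarrow> complex^'n \<Rightarrow> (complex^'n) set" where
  "orbit G v = (\<lambda>A. A *v v) ` G"

text \<open>The orbit space Z = V/G as the set of orbits; the quotient map is orbit G.\<close>
definition orbit_space :: "(complex^'n^'n) set \<Rightarrow> (complex^'n) set set" where
  "orbit_space G = range (orbit G)"

definition isotropy :: "(complex^'n^'n) set \<Rightarrow> complex^'n \<Rightarrow> (complex^'n^'n) set" where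
  "isotropy G v = {A\<in>G. A *v v = v}"

definition conjugate_in :: "(complex^'n^'n) set \<Rightarrow> (complex^'n^'n) set \<Rightarrow> (complex^'n^'n) set \<Rightarrow> bool" where
  "conjugate_in G K L \<longleftrightarrow> (\<exists>g\<in>G. L = (\<lambda>A. g ** A ** matrix_inv g) ` K)"

definition iso_type_set :: "(complex^'n^'n) set \<Rightarrow> (complex^'n^'n) set \<Rightarrow> (complex^'n) set" where
  "iso_type_set G K = {v. conjugate_in G K (isotropy G v)}"

definition stratum :: "(complex^'n^'n) set \<Rightarrow> (complex^'n^'n) set \<Rightarrow> (complex^'n) set set" where
  "stratum G K = orbit G ` iso_type_set G K"

definition strata :: "(complex^'n^'n) set \<Rightarrow> (complex^'n) set set set" where
  "strata G = {stratum G K | K. K \<subseteq> G \<and> iso_type_set G K \<noteq> {}}"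

definition complex_hyperplane :: "(complex^'n) set \<Rightarrow> bool" where
  "complex_hyperplane H \<longleftrightarrow> (\<exists>a::complex^'n. a \<noteq> 0 \<and> H = {v. (\<Sum>i\<in>UNIV. a$i * v$i) = 0})"

definition complex_reflection :: "(complex^'n^'n) set \<Rightarrow> complex^'n^'n \<Rightarrow> bool" where
  "complex_reflection G g \<longleftrightarrow> g \<in> G \<and> g \<noteq> mat 1 \<and> complex_hyperplane {v. g *v v = v}"

definition reflection_hyperplane :: "(complex^'n^'n) set \<Rightarrow> (complex^'n) set \<Rightarrow> bool" where
  "reflection_hyperplane G H \<longleftrightarrow> (\<exists>g. complex_reflection G g \<and> H = {v. g *v v = v})"

definition pointwise_stabiliser :: "(complex^'n^'n) set \<Rightarrow> (complex^'n) set \<Rightarrow> (complex^'n^'n) set" where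
  "pointwise_stabiliser G H = {A\<in>G. \<forall>v\<in>H. A *v v = v}"

text \<open>Reflection divisor D_Z = \<Sum> e_S S, as a function from hypersurfaces of Z
  (sets of orbits) to multiplicities; e_S = e_H for any H with \<pi>(H) = S.\<close>
definition reflection_divisor :: "(complex^'n^'n) set \<Rightarrow> (complex^'n) set set \<Rightarrow> nat" where
  "reflection_divisor G S =
     (if \<exists>H. reflection_hyperplane G H \<and> S = orbit G ` H
      then card (pointwise_stabiliser G (SOME H. reflection_hyperplane G H \<and> S = orbit G ` H))
      else 0)"

definition divisor_pushforward :: "('a set \<Rightarrow> 'b set) \<Rightarrow> ('a set set \<Rightarrow> nat) \<Rightarrow> ('b set set \<Rightarrow> nat)" where
  "divisor_pushforward f D = (\<lambda>S'. \<Sum>S\<in>{S. D S \<noteq> 0 \<and> f ` S = S'}. D S)"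

definition holomorphic_map :: "(complex^'n \<Rightarrow> complex^'m) \<Rightarrow> bool" where
  "holomorphic_map F \<longleftrightarrow> (\<forall>x. \<exists>L. (F has_derivative L) (at x) \<and> (\<forall>c v. L (c *s v) = c *s L v))"

definition holomorphic_diffeo :: "(complex^'n \<Rightarrow> complex^'m) \<Rightarrow> bool" where
  "holomorphic_diffeo F \<longleftrightarrow> bij F \<and> holomorphic_map F \<and> holomorphic_map (inv F)"

text \<open>The induced map of orbit spaces f(\<pi> v) = \<pi>'(F v), i.e. an orbit O is sent to F ` O.\<close>
definition induced_map :: "(complex^'n \<Rightarrow> complex^'m) \<Rightarrow> (complex^'n) set \<Rightarrow> (complex^'m) set" where
  "induced_map F X = F ` X"

end

theory Submission
  imports Defs
begin

(* The orbit map F intertwines the two actions: for every g in G there is a unique phi g in G'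
   with F (g v) = phi g (F v).  Outside the finitely many proper subspaces on which two elements
   of G' agree, the element of G' taking F v to F (g v) is unique, hence locally constant; the
   complement of these subspaces is connected and dense, because complex subspaces have real
   codimension at least two.  So phi : G -> G' is a group isomorphism which transports isotropy
   groups and their conjugacy classes, and F maps each V_(K) onto V'_(phi K).
   Differentiating F o g = phi g o F at the common fixed point 0 shows that F maps the fixed
   hyperplane of a reflection g onto that of the reflection phi g, with pointwise stabilisers
   identified by phi.  As the induced map of orbit spaces is injective, it pushes D_Z to D_Z'. *)

section \<open>Complements of finitely many subspaces\<close>

lemma finite_line_hits_subspace:
  fixes x d :: "'a::field^'n"
  assumes "vec.subspace W" and "x \<notin> W"
  shows "finite {z. x + z *s d \<in> W}"
proof -
  have unique: "z1 = z2" if "x + z1 *s d \<in> W" "x + z2 *s d \<in> W" for z1 z2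
  proof (rule ccontr)
    assume "z1 \<noteq> z2"
    have "(z1 - z2) *s d \<in> W"
      using vec.subspace_diff[OF assms(1) that] by (simp add: vec.scale_left_diff_distrib)
    then have "inverse (z1 - z2) *s ((z1 - z2) *s d) \<in> W"
      using assms(1) vec.subspace_scale by blast
    then have "d \<in> W" using \<open>z1 \<noteq> z2\<close> by (simp only: vec.scale_scale) simp
    then have "(x + z1 *s d) - z1 *s d \<in> W"
      using assms(1) that(1) vec.subspace_diff vec.subspace_scale by blast
    then show False using assms(2) by simp
  qed
  show ?thesis
  proof (cases "\<exists>z0. x + z0 *s d \<in> W")
    case True
    then obtain z0 where "x + z0 *s d \<in> W" by blast
    with unique have "{z. x + z *s d \<in> W} \<subseteq> {z0}" by blast
    then show ?thesis by (rule finite_subset) simp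
  qed simp
qed

lemma finite_line_hits_Union_subspaces:
  fixes x d :: "'a::field^'n"
  assumes "finite \<W>" "\<forall>W\<in>\<W>. vec.subspace W" and "x \<notin> \<Union>\<W>"
  shows "finite {z. x + z *s d \<in> \<Union>\<W>}"
proof -
  have "{z. x + z *s d \<in> \<Union>\<W>} = (\<Union>W\<in>\<W>. {z. x + z *s d \<in> W})" by auto
  moreover have "finite {z. x + z *s d \<in> W}" if "W \<in> \<W>" for W
    using assms(2,3) that by (blast intro: finite_line_hits_subspace)
  ultimately show ?thesis using assms(1) by simp
qed

text \<open>On the line from a point outside the union towards a point outside one further
  subspace, all but finitely many points avoid every subspace.\<close>
lemma subspace_avoids_finite_Union:
  fixes H :: "('a::field_char_0^'n) set"
  assumes "finite \<W>" "\<forall>W\<in>\<W>. vec.subspace W \<and> \<not> H \<subseteq> W" and H: "vec.subspace H"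
  shows "\<exists>x\<in>H. x \<notin> \<Union>\<W>"
  using assms(1,2)
proof (induction \<W> rule: finite_induct)
  case empty
  then show ?case using vec.subspace_0[OF H] by blast
next
  case (insert W \<W>)
  then obtain x where x: "x \<in> H" "x \<notin> \<Union>\<W>" by auto
  obtain p where p: "p \<in> H" "p \<notin> W" and W: "vec.subspace W" using insert.prems by auto
  show ?case
  proof (cases "x \<in> W")
    case False
    then show ?thesis using x by auto
  next
    case True
    have "finite {z. x + z *s (p - x) \<in> \<Union>\<W>}"
      by (rule finite_line_hits_Union_subspaces[OF insert.hyps(1) _ x(2)]) (use insert.prems in simp)
    then have "\<exists>z. z \<notin> insert 0 {z. x + z *s (p - x) \<in> \<Union>\<W>}"
      by (rule ex_new_if_finite[OF infinite_UNIV_char_0 finite.insertI])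
    then obtain z where z: "z \<noteq> 0" "x + z *s (p - x) \<notin> \<Union>\<W>"
      unfolding insert_iff mem_Collect_eq de_Morgan_disj by blast
    have "x + z *s (p - x) \<notin> W"
    proof
      assume "x + z *s (p - x) \<in> W"
      from vec.subspace_diff[OF W this True] have "z *s (p - x) \<in> W" by simp
      from vec.subspace_scale[OF W this, of "inverse z"] have "p - x \<in> W" using z(1) by simp
      from vec.subspace_add[OF W this True] show False using p(2) by simp
    qed
    moreover have "x + z *s (p - x) \<in> H"
      using vec.subspace_add[OF H x(1) vec.subspace_scale[OF H vec.subspace_diff[OF H p(1) x(1)]]] .
    ultimately show ?thesis using z(2) by blast
  qed
qed

lemma subspace_subset_finite_Union_subspaces:
  fixes H :: "('a::field_char_0^'n) set"
  assumes "finite \<W>" "\<forall>W\<in>\<W>. vec.subspace W" "vec.subspace H" "H \<subseteq> \<Union>\<W>"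
  shows "\<exists>W\<in>\<W>. H \<subseteq> W"
proof (rule ccontr)
  assume "\<not> (\<exists>W\<in>\<W>. H \<subseteq> W)"
  then have "\<forall>W\<in>\<W>. vec.subspace W \<and> \<not> H \<subseteq> W" using assms(2) by blast
  from subspace_avoids_finite_Union[OF assms(1) this assms(3)] show False using assms(4) by blast
qed

lemma continuous_on_line: "continuous_on UNIV (\<lambda>z::complex. x + z *s (d::complex^'n))"
proof -
  have eq: "(\<lambda>z::complex. x + z *s d) = (\<lambda>z. \<chi> i. x$i + z * d$i)"
    by (simp add: vec_eq_iff fun_eq_iff)
  show ?thesis unfolding eq by (intro continuous_on_vec_lambda continuous_intros)
qed

text \<open>Two points of the complement are joined inside the complex line through them, which
  meets the union of the subspaces in finitely many points only.\<close>
lemma connected_Compl_Union_subspaces: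
  fixes \<W> :: "(complex^'n) set set"
  assumes "finite \<W>" "\<forall>W\<in>\<W>. vec.subspace W"
  shows "connected (- \<Union>\<W>)"
proof -
  have "path_component (- \<Union>\<W>) x y" if "x \<in> - \<Union>\<W>" "y \<in> - \<Union>\<W>" for x y
  proof -
    define line where "line z = x + z *s (y - x)" for z
    define B where "B = {z. line z \<in> \<Union>\<W>}"
    have "finite B" unfolding B_def line_def
      by (rule finite_line_hits_Union_subspaces[OF assms]) (use that in simp)
    then have "path_connected (UNIV - B)"
      by (intro path_connected_open_diff_countable) (simp_all add: countable_finite connected_UNIV)
    then have "path_connected (line ` (UNIV - B))" unfolding line_def
      by (rule path_connected_continuous_image[OF continuous_on_subset[OF continuous_on_line subset_UNIV]])
    moreover have "0 \<notin> B" "1 \<notin> B" using that by (simp_all add: B_def line_def)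
    then have "x \<in> line ` (UNIV - B)" "y \<in> line ` (UNIV - B)"
      using image_eqI[of x line 0 "UNIV - B"] image_eqI[of y line 1 "UNIV - B"]
      by (simp_all add: line_def)
    ultimately have "path_component (line ` (UNIV - B)) x y"
      unfolding path_connected_component by blast
    moreover have "line ` (UNIV - B) \<subseteq> - \<Union>\<W>" unfolding B_def by blast
    ultimately show ?thesis by (rule path_component_of_subset[rotated])
  qed
  then show ?thesis by (simp add: path_connected_component path_connected_imp_connected)
qed

lemma closure_Compl_Union_proper_subspaces:
  fixes \<W> :: "(complex^'n) set set"
  assumes "finite \<W>" "\<forall>W\<in>\<W>. vec.subspace W \<and> W \<noteq> UNIV"
  shows "closure (- \<Union>\<W>) = UNIV"
proof -
  have "\<forall>W\<in>\<W>. vec.subspace W \<and> \<not> UNIV \<subseteq> W" using assms(2) by blast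
  then obtain x where x: "x \<notin> \<Union>\<W>"
    using subspace_avoids_finite_Union[OF assms(1) _ vec.subspace_UNIV] by blast
  have "y \<in> closure (- \<Union>\<W>)" for y
  proof -
    define line where "line z = x + z *s (y - x)" for z
    define B where "B = {z. line z \<in> \<Union>\<W>}"
    have "finite B" unfolding B_def line_def
      by (rule finite_line_hits_Union_subspaces[OF assms(1) _ x]) (use assms(2) in blast)
    then have "closure (- B) = UNIV" by (simp add: closure_complement empty_interior_finite)
    then have "y \<in> line ` closure (- B)"
      using image_eqI[of y line 1] by (simp add: line_def)
    also have "\<dots> \<subseteq> closure (line ` (- B))" unfolding line_def
      by (rule continuous_image_closure_subset[OF continuous_on_line subset_UNIV])
    also have "\<dots> \<subseteq> closure (- \<Union>\<W>)" by (rule closure_mono) (unfold B_def, blast)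
    finally show ?thesis .
  qed
  then show ?thesis by blast
qed

lemma closed_cover_of_connected_dense:
  fixes A :: "'i \<Rightarrow> 'a::topological_space set"
  assumes S: "connected S" "closure S = UNIV"
    and A: "finite K" "\<And>k. k \<in> K \<Longrightarrow> closed (A k)" "S \<subseteq> (\<Union>k\<in>K. A k)"
    and disjoint: "\<And>k k' x. k \<in> K \<Longrightarrow> k' \<in> K \<Longrightarrow> x \<in> S \<Longrightarrow> x \<in> A k \<Longrightarrow> x \<in> A k' \<Longrightarrow> k = k'"
  shows "\<exists>k\<in>K. A k = UNIV"
proof -
  have "S \<noteq> {}" using S(2) by auto
  then obtain x k where k: "x \<in> S" "k \<in> K" "x \<in> A k" using A(3) by blast
  define E1 where "E1 = S \<inter> A k"
  define E2 where "E2 = S \<inter> (\<Union>k'\<in>K - {k}. A k')"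
  have "closedin (top_of_set S) E1" unfolding E1_def by (intro closedin_closed_Int A(2) k(2))
  moreover have "closedin (top_of_set S) E2" unfolding E2_def
    using A(1,2) by (intro closedin_closed_Int closed_UN) auto
  moreover have "E1 \<union> E2 = S" using A(3) unfolding E1_def E2_def by blast
  moreover have "E1 \<inter> E2 = {}" using disjoint[OF k(2)] unfolding E1_def E2_def by blast
  moreover have "E1 \<noteq> {}" using k unfolding E1_def by blast
  ultimately have "E2 = {}" using S(1) unfolding connected_closedin_eq by blast
  then have "S \<subseteq> A k" using \<open>E1 \<union> E2 = S\<close> unfolding E1_def by blast
  then have "closure S \<subseteq> A k" by (rule closure_minimal) (rule A(2)[OF k(2)])
  then show ?thesis using k(2) S(2) by blast
qed

section \<open>Finite linear groups and reflection divisors\<close>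

lemma matrix_inv_right:
  fixes A :: "'a::semiring_1^'n^'m"
  assumes "invertible A" shows "A ** matrix_inv A = mat 1"
  using someI_ex[OF assms[unfolded invertible_def]] unfolding matrix_inv_def by blast

lemma matrix_inv_left:
  fixes A :: "'a::semiring_1^'n^'m"
  assumes "invertible A" shows "matrix_inv A ** A = mat 1"
  using someI_ex[OF assms[unfolded invertible_def]] unfolding matrix_inv_def by blast

lemma matrix_inv_unique:
  fixes A B :: "'a::comm_semiring_1^'n^'n"
  assumes "A ** B = mat 1" "B ** A = mat 1" shows "matrix_inv A = B"
proof -
  have "invertible A" using assms unfolding invertible_def by blast
  have "matrix_inv A = (matrix_inv A ** A) ** B"
    using assms(1) by (simp add: matrix_mul_assoc[symmetric] matrix_mul_rid)
  also have "\<dots> = B" using matrix_inv_left[OF \<open>invertible A\<close>] by (simp add: matrix_mul_lid)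
  finally show ?thesis .
qed

lemma finite_linear_groupD:
  assumes "finite_linear_group G"
  shows "finite G" "mat 1 \<in> G" "A \<in> G \<Longrightarrow> invertible A" "A \<in> G \<Longrightarrow> matrix_inv A \<in> G"
    "A \<in> G \<Longrightarrow> B \<in> G \<Longrightarrow> A ** B \<in> G"
  using assms unfolding finite_linear_group_def by auto

lemma isotropy_eq_pointwise_stabiliser: "isotropy G v = pointwise_stabiliser G {v}"
  unfolding isotropy_def pointwise_stabiliser_def by simp

lemma matrix_conjugate_apply:
  fixes g A :: "'a::comm_semiring_1^'n^'n"
  assumes "invertible g"
  shows "(g ** A ** matrix_inv g) *v (g *v u) = g *v (A *v u)"
proof -
  have "(g ** A ** matrix_inv g) *v (g *v u) = (g ** A) *v ((matrix_inv g ** g) *v u)"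
    by (simp add: matrix_vector_mul_assoc matrix_mul_assoc)
  also have "\<dots> = g *v (A *v u)"
    using matrix_inv_left[OF assms] by (simp add: matrix_vector_mul_assoc matrix_vector_mul_lid)
  finally show ?thesis .
qed

lemma inj_matrix_conjugate:
  fixes g :: "'a::comm_semiring_1^'n^'n"
  assumes "invertible g"
  shows "inj (\<lambda>A. g ** A ** matrix_inv g)"
proof (rule inj_on_inverseI)
  fix A :: "'a^'n^'n"
  have "matrix_inv g ** (g ** A ** matrix_inv g) ** g
      = (matrix_inv g ** g) ** A ** (matrix_inv g ** g)"
    by (simp add: matrix_mul_assoc)
  then show "matrix_inv g ** (g ** A ** matrix_inv g) ** g = A"
    using matrix_inv_left[OF assms] by (simp add: matrix_mul_lid matrix_mul_rid)
qed

lemma reflection_hyperplane_subspace: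
  assumes "reflection_hyperplane G H" shows "vec.subspace H"
proof -
  obtain g where "H = {v. g *v v = v}"
    using assms unfolding reflection_hyperplane_def by blast
  then have "H = {v. (g - mat 1) *v v = 0}"
    by (simp add: matrix_vector_mult_diff_rdistrib matrix_vector_mul_lid)
  then show ?thesis by (simp add: vec.subspace_kernel)
qed

text \<open>A subspace is not a finite union of proper subspaces, so a subspace covered by
  the translates \<open>g H1\<close> lies in one of them.\<close>
lemma same_orbits_imp_subset_translate:
  assumes "finite G" "mat 1 \<in> G" "vec.subspace H1" "vec.subspace H2"
    and orbits: "orbit G ` H1 = orbit G ` H2"
  shows "\<exists>g\<in>G. H2 \<subseteq> (\<lambda>v. g *v v) ` H1"
proof -
  let ?\<W> = "(\<lambda>g. (\<lambda>v. g *v v) ` H1) ` G"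
  have cover: "H2 \<subseteq> \<Union>?\<W>"
  proof
    fix v assume "v \<in> H2"
    then have "orbit G v \<in> orbit G ` H1" using orbits by simp
    then obtain u where u: "u \<in> H1" "orbit G v = orbit G u" by blast
    have "v \<in> orbit G v"
      unfolding orbit_def using assms(2) by (rule image_eqI[rotated]) (simp add: matrix_vector_mul_lid)
    then obtain g where "g \<in> G" "v = g *v u" using u(2) unfolding orbit_def by blast
    then show "v \<in> \<Union>?\<W>" using u(1) by blast
  qed
  have "finite ?\<W>" using assms(1) by simp
  moreover have "\<forall>W\<in>?\<W>. vec.subspace W" using vec.subspace_image[OF assms(3)] by blast
  ultimately have "\<exists>W\<in>?\<W>. H2 \<subseteq> W"
    by (rule subspace_subset_finite_Union_subspaces[OF _ _ assms(4) cover])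
  then obtain g where "g \<in> G" "H2 \<subseteq> (\<lambda>v. g *v v) ` H1" by (elim bexE imageE) simp
  then show ?thesis by blast
qed

lemma card_pointwise_stabiliser_le:
  assumes G: "finite_linear_group G" and "g \<in> G" "H2 \<subseteq> (\<lambda>v. g *v v) ` H1"
  shows "card (pointwise_stabiliser G H1) \<le> card (pointwise_stabiliser G H2)"
proof (rule card_inj_on_le)
  have "invertible g" using \<open>g \<in> G\<close> by (rule finite_linear_groupD(3)[OF G])
  show "inj_on (\<lambda>A. g ** A ** matrix_inv g) (pointwise_stabiliser G H1)"
    by (rule inj_on_subset[OF inj_matrix_conjugate[OF \<open>invertible g\<close>] subset_UNIV])
  show "(\<lambda>A. g ** A ** matrix_inv g) ` pointwise_stabiliser G H1 \<subseteq> pointwise_stabiliser G H2"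
  proof (rule image_subsetI)
    fix A assume "A \<in> pointwise_stabiliser G H1"
    then have A: "A \<in> G" "\<And>u. u \<in> H1 \<Longrightarrow> A *v u = u" unfolding pointwise_stabiliser_def by auto
    have "g ** A ** matrix_inv g \<in> G"
      using A(1) \<open>g \<in> G\<close> by (intro finite_linear_groupD(4,5)[OF G])
    moreover have "(g ** A ** matrix_inv g) *v v = v" if v: "v \<in> H2" for v
    proof -
      obtain u where "u \<in> H1" "v = g *v u" using assms(3) v by blast
      then show ?thesis using A(2) matrix_conjugate_apply[OF \<open>invertible g\<close>] by simp
    qed
    ultimately show "g ** A ** matrix_inv g \<in> pointwise_stabiliser G H2"
      unfolding pointwise_stabiliser_def by blast
  qed
  show "finite (pointwise_stabiliser G H2)"
    using finite_linear_groupD(1)[OF G] unfolding pointwise_stabiliser_def by simp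
qed

lemma card_pointwise_stabiliser_same_orbits:
  assumes G: "finite_linear_group G"
    and H: "reflection_hyperplane G H1" "reflection_hyperplane G H2" "orbit G ` H1 = orbit G ` H2"
  shows "card (pointwise_stabiliser G H1) = card (pointwise_stabiliser G H2)"
proof -
  note translate = same_orbits_imp_subset_translate[OF finite_linear_groupD(1,2)[OF G]]
  note subspace = reflection_hyperplane_subspace[OF H(1)] reflection_hyperplane_subspace[OF H(2)]
  obtain g where "g \<in> G" "H2 \<subseteq> (\<lambda>v. g *v v) ` H1" using translate[OF subspace H(3)] by blast
  moreover obtain g' where "g' \<in> G" "H1 \<subseteq> (\<lambda>v. g' *v v) ` H2"
    using translate[OF subspace(2,1) H(3)[symmetric]] by blast
  ultimately show ?thesis using card_pointwise_stabiliser_le[OF G] le_antisym by metis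
qed

lemma reflection_divisor_orbits:
  assumes G: "finite_linear_group G" and H: "reflection_hyperplane G H"
  shows "reflection_divisor G (orbit G ` H) = card (pointwise_stabiliser G H)"
proof -
  define H0 where "H0 = (SOME H'. reflection_hyperplane G H' \<and> orbit G ` H = orbit G ` H')"
  have "reflection_hyperplane G H0 \<and> orbit G ` H = orbit G ` H0"
    unfolding H0_def by (rule someI[of _ H]) (simp add: H)
  then have "card (pointwise_stabiliser G H) = card (pointwise_stabiliser G H0)"
    using card_pointwise_stabiliser_same_orbits[OF G H] by blast
  then show ?thesis using H unfolding reflection_divisor_def H0_def by auto
qed

lemma divisor_pushforward_image:
  assumes "inj f" shows "divisor_pushforward f D (f ` S) = D S"
proof -
  have "{T. D T \<noteq> 0 \<and> f ` T = f ` S} = (if D S = 0 then {} else {S})"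
    by (auto simp: inj_image_eq_iff[OF assms])
  then show ?thesis unfolding divisor_pushforward_def by simp
qed

section \<open>Holomorphic maps\<close>

lemma holomorphic_map_continuous: "holomorphic_map F \<Longrightarrow> continuous_on UNIV F"
  unfolding holomorphic_map_def
  by (metis continuous_at_imp_continuous_on has_derivative_continuous)

lemma holomorphic_map_complex_derivative:
  assumes "holomorphic_map F"
  obtains L where "(F has_derivative L) (at x)" "Vector_Spaces.linear (*s) (*s) L"
proof -
  obtain L where L: "(F has_derivative L) (at x)" "\<And>c v. L (c *s v) = c *s L v"
    using assms unfolding holomorphic_map_def by blast
  have "linear L" using L(1) by (rule has_derivative_linear)
  then have "Vector_Spaces.linear (*s) (*s) L"
    by unfold_locales (auto simp: linear_add L(2))
  with L(1) show ?thesis by (rule that)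
qed

lemma has_derivative_intertwines:
  fixes F :: "'a::real_normed_vector \<Rightarrow> 'b::real_normed_vector"
  assumes F: "(F has_derivative L) (at 0)" and A: "bounded_linear A" and B: "bounded_linear B"
    and intertwines: "\<And>v. F (A v) = B (F v)"
  shows "L (A v) = B (L v)"
proof -
  have F_at_A0: "(F has_derivative L) (at (A 0))"
    using F bounded_linear.linear[OF A] by (simp add: linear_0)
  have "((F \<circ> A) has_derivative (L \<circ> A)) (at 0)"
    by (rule diff_chain_at[OF bounded_linear_imp_has_derivative[OF A] F_at_A0])
  moreover have "F \<circ> A = B \<circ> F" using intertwines by (simp add: fun_eq_iff)
  ultimately have "((B \<circ> F) has_derivative (L \<circ> A)) (at 0)" by simp
  moreover have "((B \<circ> F) has_derivative (B \<circ> L)) (at 0)"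
    by (rule diff_chain_at[OF F bounded_linear_imp_has_derivative[OF B]])
  ultimately have "L \<circ> A = B \<circ> L" by (rule has_derivative_unique)
  then show ?thesis by (simp add: fun_eq_iff)
qed

lemma has_derivative_inv_cancel:
  assumes "bij F" "(F has_derivative L) (at x)" "(inv F has_derivative L') (at (F x))"
  shows "L' (L v) = v"
proof -
  have "inv F \<circ> F = id" using bij_is_inj[OF assms(1)] by (simp add: fun_eq_iff)
  then have "(id has_derivative (L' \<circ> L)) (at x)"
    using diff_chain_at[OF assms(2,3)] by simp
  then have "L' \<circ> L = id" using has_derivative_id by (rule has_derivative_unique)
  then show ?thesis by (simp add: fun_eq_iff)
qed

lemma complex_hyperplane_vimage:
  fixes L :: "complex^'m \<Rightarrow> complex^'n"
  assumes "complex_hyperplane H" "Vector_Spaces.linear (*s) (*s) L" "surj L"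
  shows "complex_hyperplane (L -` H)"
proof -
  obtain a where a: "a \<noteq> 0" "H = {v. (\<Sum>i\<in>UNIV. a$i * v$i) = 0}"
    using assms(1) unfolding complex_hyperplane_def by blast
  define b :: "complex^'m" where "b = (\<chi> j. \<Sum>i\<in>UNIV. a$i * L (axis j 1) $ i)"
  have pullback: "(\<Sum>i\<in>UNIV. a$i * L w $ i) = (\<Sum>j\<in>UNIV. b$j * w$j)" for w
  proof -
    have "(\<Sum>i\<in>UNIV. a$i * L w $ i) = (\<Sum>i\<in>UNIV. \<Sum>j\<in>UNIV. a$i * (w$j * L (axis j 1) $ i))"
      by (simp add: linear_componentwise[OF assms(2), of w] sum_distrib_left)
    also have "\<dots> = (\<Sum>j\<in>UNIV. \<Sum>i\<in>UNIV. a$i * (w$j * L (axis j 1) $ i))"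
      by (rule sum.swap)
    also have "\<dots> = (\<Sum>j\<in>UNIV. b$j * w$j)"
      unfolding b_def by (simp add: sum_distrib_left mult_ac)
    finally show ?thesis .
  qed
  have "b \<noteq> 0"
  proof
    assume "b = 0"
    then have vanish: "(\<Sum>i\<in>UNIV. a$i * v$i) = 0" for v
      using pullback[of "inv L v"] surj_f_inv_f[OF assms(3), of v] by simp
    have "a$k = 0" for k
      using vanish[of "axis k 1"] by (simp add: axis_def if_distrib cong: if_cong)
    then show False using a(1) by (simp add: vec_eq_iff)
  qed
  moreover have "L -` H = {w. (\<Sum>j\<in>UNIV. b$j * w$j) = 0}"
    using a(2) pullback by auto
  ultimately show ?thesis unfolding complex_hyperplane_def by blast
qed

section \<open>Orbit preserving holomorphic diffeomorphisms\<close>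

lemma matrices_separated_off_finite_subspaces:
  fixes M :: "('a::field^'n^'m) set"
  assumes "finite M"
  obtains \<W> where "finite \<W>" "\<forall>W\<in>\<W>. vec.subspace W \<and> W \<noteq> UNIV"
    and "\<And>w h h'. w \<notin> \<Union>\<W> \<Longrightarrow> h \<in> M \<Longrightarrow> h' \<in> M \<Longrightarrow> h *v w = h' *v w \<Longrightarrow> h = h'"
proof -
  define D where "D = {h - h' | h h'. h \<in> M \<and> h' \<in> M \<and> h \<noteq> h'}"
  define \<W> where "\<W> = (\<lambda>d. {w. d *v w = 0}) ` D"
  have "D \<subseteq> {h - h' | h h'. h \<in> M \<and> h' \<in> M}"
    unfolding D_def by blast
  then have "finite D"
    by (rule finite_subset) (rule finite_image_set2, simp_all add: assms)
  then have "finite \<W>" unfolding \<W>_def by (rule finite_imageI)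
  moreover have "\<forall>W\<in>\<W>. vec.subspace W \<and> W \<noteq> UNIV"
  proof
    fix W assume "W \<in> \<W>"
    then obtain d where "d \<in> D" and W: "W = {w. d *v w = 0}" unfolding \<W>_def by (rule imageE)
    then have "d \<noteq> 0" unfolding D_def by auto
    then obtain w where "d *v w \<noteq> 0 *v w" unfolding matrix_eq by blast
    then have "w \<notin> W" using W by simp
    moreover have "vec.subspace W" unfolding W by (rule vec.subspace_kernel)
    ultimately show "vec.subspace W \<and> W \<noteq> UNIV" by blast
  qed
  moreover have "h = h'" if "w \<notin> \<Union>\<W>" "h \<in> M" "h' \<in> M" "h *v w = h' *v w" for w h h'
  proof (rule ccontr)
    assume "h \<noteq> h'"
    then have "h - h' \<in> D" unfolding D_def using that(2,3) by blast
    then have "{w. (h - h') *v w = 0} \<in> \<W>" unfolding \<W>_def by (rule imageI)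
    moreover have "w \<in> {w. (h - h') *v w = 0}"
      using that(4) by (simp add: matrix_vector_mult_diff_rdistrib)
    ultimately show False using that(1) by blast
  qed
  ultimately show ?thesis by (rule that)
qed

text \<open>Off the subspaces separating the elements of \<open>G'\<close>, the \<open>h\<close> with
  \<open>F (g v) = h (F v)\<close> is unique, hence locally constant since the sets
  \<open>{v. F (g v) = h (F v)}\<close> are closed.\<close>
lemma orbit_map_intertwines:
  fixes G :: "(complex^'n^'n) set" and G' :: "(complex^'m^'m) set"
    and F :: "complex^'n \<Rightarrow> complex^'m"
  assumes "finite G'" "bij F" and cont: "continuous_on UNIV F" "continuous_on UNIV (inv F)"
    and orbits: "\<forall>v. F ` orbit G v = orbit G' (F v)" and "g \<in> G"
  shows "\<exists>h\<in>G'. \<forall>v. F (g *v v) = h *v F v"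
proof -
  obtain \<W> where finite: "finite \<W>" and proper: "\<forall>W\<in>\<W>. vec.subspace W \<and> W \<noteq> UNIV"
    and separated: "\<And>w h h'. w \<notin> \<Union>\<W> \<Longrightarrow> h \<in> G' \<Longrightarrow> h' \<in> G' \<Longrightarrow> h *v w = h' *v w \<Longrightarrow> h = h'"
    using matrices_separated_off_finite_subspaces[OF assms(1)] by blast
  have connected: "connected (- \<Union>\<W>)"
    using connected_Compl_Union_subspaces[OF finite] proper by simp
  have dense: "closure (- \<Union>\<W>) = UNIV"
    by (rule closure_Compl_Union_proper_subspaces[OF finite proper])
  define S where "S = inv F ` (- \<Union>\<W>)"
  define A where "A h = {v. F (g *v v) = h *v F v}" for h
  have "connected S"
    unfolding S_def by (rule connected_continuous_image[OF continuous_on_subset[OF cont(2)] connected]) simp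
  moreover have "closure S = UNIV"
  proof -
    have "UNIV = inv F ` closure (- \<Union>\<W>)"
      using dense bij_is_surj[OF bij_imp_bij_inv[OF assms(2)]] by simp
    also have "\<dots> \<subseteq> closure S"
      unfolding S_def by (rule continuous_image_closure_subset[OF cont(2) subset_UNIV])
    finally show ?thesis by blast
  qed
  moreover have "closed (A h)" for h
    unfolding A_def
  proof (rule closed_Collect_eq)
    show "continuous_on UNIV (\<lambda>v. F (g *v v))"
      by (rule continuous_on_compose2[OF cont(1) linear_continuous_on[OF matrix_vector_mul_bounded_linear]])
        simp
    show "continuous_on UNIV (\<lambda>v. h *v F v)"
      by (rule continuous_on_compose2[OF linear_continuous_on[OF matrix_vector_mul_bounded_linear, of UNIV]
          cont(1)]) simp
  qed
  moreover have "S \<subseteq> (\<Union>h\<in>G'. A h)"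
  proof
    fix v
    have "F (g *v v) \<in> orbit G' (F v)"
      using orbits \<open>g \<in> G\<close> unfolding orbit_def by blast
    then show "v \<in> (\<Union>h\<in>G'. A h)" unfolding orbit_def A_def by blast
  qed
  moreover have "h = h'" if "h \<in> G'" "h' \<in> G'" "v \<in> S" "v \<in> A h" "v \<in> A h'" for h h' v
  proof -
    obtain w where "w \<in> - \<Union>\<W>" "v = inv F w" using \<open>v \<in> S\<close> unfolding S_def by blast
    then have "F v \<notin> \<Union>\<W>" using surj_f_inv_f[OF bij_is_surj[OF assms(2)]] by simp
    then show ?thesis using separated that unfolding A_def by simp
  qed
  ultimately obtain h where "h \<in> G'" "A h = UNIV"
    using closed_cover_of_connected_dense[of S G' A] assms(1) by blast
  then show ?thesis unfolding A_def by auto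
qed

locale orbit_equivalence =
  fixes G :: "(complex^'n^'n) set" and G' :: "(complex^'m^'m) set"
    and F :: "complex^'n \<Rightarrow> complex^'m"
  assumes group: "finite_linear_group G" and group': "finite_linear_group G'"
    and diffeo: "holomorphic_diffeo F"
    and maps_orbits: "\<forall>v. F ` orbit G v = orbit G' (F v)"
begin

lemma bij_F: "bij F"
  using diffeo unfolding holomorphic_diffeo_def by simp

lemma inj_F: "inj F"
  using bij_F by (rule bij_is_inj)

lemma inv_F_F [simp]: "inv F (F v) = v"
  using inj_F by simp

lemma F_inv_F [simp]: "F (inv F w) = w"
  using bij_F by (simp add: bij_is_surj surj_f_inv_f)

lemma F_image_eqI:
  assumes "\<And>v. F v \<in> Y \<longleftrightarrow> v \<in> X" shows "F ` X = Y"
proof (intro equalityI subsetI)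
  fix w assume "w \<in> Y"
  then have "inv F w \<in> X" using assms[of "inv F w"] by simp
  then show "w \<in> F ` X" by (rule image_eqI[rotated]) simp
qed (use assms in blast)

lemma inverse: "orbit_equivalence G' G (inv F)"
proof
  show "finite_linear_group G'" "finite_linear_group G" by (fact group' group)+
  show "holomorphic_diffeo (inv F)"
    using diffeo bij_F unfolding holomorphic_diffeo_def by (simp add: bij_imp_bij_inv inv_inv_eq)
  show "\<forall>w. inv F ` orbit G' w = orbit G (inv F w)"
  proof
    fix w
    have "orbit G' w = F ` orbit G (inv F w)" using maps_orbits by simp
    then show "inv F ` orbit G' w = orbit G (inv F w)" by (simp add: image_image)
  qed
qed

definition phi :: "complex^'n^'n \<Rightarrow> complex^'m^'m" where
  "phi g = (THE h. h \<in> G' \<and> (\<forall>v. F (g *v v) = h *v F v))"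

lemma intertwiner_unique:
  assumes "\<forall>v. F (g *v v) = h1 *v F v" "\<forall>v. F (g *v v) = h2 *v F v" shows "h1 = h2"
proof -
  have "h1 *v w = h2 *v w" for w
    using assms(1)[rule_format, of "inv F w"] assms(2)[rule_format, of "inv F w"] by simp
  then show ?thesis by (simp add: matrix_eq)
qed

lemma phi:
  assumes "g \<in> G" shows phi_in: "phi g \<in> G'" and phi_intertwines: "F (g *v v) = phi g *v F v"
proof -
  have "continuous_on UNIV F" "continuous_on UNIV (inv F)"
    using diffeo holomorphic_map_continuous unfolding holomorphic_diffeo_def by blast+
  then obtain h where h: "h \<in> G'" "\<forall>v. F (g *v v) = h *v F v"
    using orbit_map_intertwines[OF finite_linear_groupD(1)[OF group'] bij_F _ _ maps_orbits assms]
    by blast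
  have "phi g = h" unfolding phi_def
    by (rule the_equality) (use h intertwiner_unique in blast)+
  then show "phi g \<in> G'" "F (g *v v) = phi g *v F v" using h by auto
qed

lemma phi_eqI: "g \<in> G \<Longrightarrow> \<forall>v. F (g *v v) = h *v F v \<Longrightarrow> phi g = h"
  using phi_intertwines intertwiner_unique by blast

lemma phi_mult:
  assumes "A \<in> G" "B \<in> G" shows "phi (A ** B) = phi A ** phi B"
proof (rule phi_eqI)
  show "A ** B \<in> G" using assms by (rule finite_linear_groupD(5)[OF group])
  show "\<forall>v. F ((A ** B) *v v) = (phi A ** phi B) *v F v"
    using assms by (simp add: phi_intertwines flip: matrix_vector_mul_assoc)
qed

lemma phi_one: "phi (mat 1) = mat 1"
  by (rule phi_eqI[OF finite_linear_groupD(2)[OF group]]) (simp add: matrix_vector_mul_lid)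

lemma phi_matrix_inv:
  assumes "g \<in> G" shows "phi (matrix_inv g) = matrix_inv (phi g)"
proof -
  have "matrix_inv g \<in> G" "invertible g"
    using assms finite_linear_groupD(3,4)[OF group] by auto
  then have "phi g ** phi (matrix_inv g) = mat 1" "phi (matrix_inv g) ** phi g = mat 1"
    using assms by (simp_all add: phi_one matrix_inv_left matrix_inv_right flip: phi_mult)
  then show ?thesis by (intro matrix_inv_unique[symmetric])
qed

lemma phi_conjugate:
  assumes "g \<in> G" "A \<in> G"
  shows "phi (g ** A ** matrix_inv g) = phi g ** phi A ** matrix_inv (phi g)"
  using assms finite_linear_groupD(4,5)[OF group] by (simp add: phi_mult phi_matrix_inv)

lemma inj_on_phi: "inj_on phi G"
proof
  fix g g' assume "g \<in> G" "g' \<in> G" "phi g = phi g'"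
  then have "F (g *v v) = F (g' *v v)" for v by (simp add: phi_intertwines)
  then have "g *v v = g' *v v" for v using inj_F by (simp add: inj_eq)
  then show "g = g'" by (simp add: matrix_eq)
qed

lemma phi_image: "phi ` G = G'"
proof (intro equalityI subsetI)
  interpret inverse: orbit_equivalence G' G "inv F" by (rule inverse)
  fix h assume h: "h \<in> G'"
  have "F (inverse.phi h *v v) = h *v F v" for v
    using arg_cong[OF inverse.phi_intertwines[OF h, of "F v"], of F] by simp
  then have "phi (inverse.phi h) = h"
    using phi_eqI[OF inverse.phi_in[OF h]] by blast
  then show "h \<in> phi ` G" using inverse.phi_in[OF h] by (metis imageI)
qed (use phi_in in blast)

lemma pointwise_stabiliser_image:
  "pointwise_stabiliser G' (F ` H) = phi ` pointwise_stabiliser G H"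
proof -
  have phi_mem: "phi g \<in> pointwise_stabiliser G' (F ` H) \<longleftrightarrow> g \<in> pointwise_stabiliser G H"
    if "g \<in> G" for g
    using that inj_F by (simp add: pointwise_stabiliser_def phi_in inj_eq flip: phi_intertwines)
  show ?thesis
  proof (intro equalityI subsetI)
    fix h assume h: "h \<in> pointwise_stabiliser G' (F ` H)"
    then have "h \<in> phi ` G" unfolding phi_image pointwise_stabiliser_def by blast
    then obtain g where "g \<in> G" "h = phi g" by blast
    then show "h \<in> phi ` pointwise_stabiliser G H" using h phi_mem by blast
  next
    fix h assume "h \<in> phi ` pointwise_stabiliser G H"
    then obtain g where g: "g \<in> pointwise_stabiliser G H" "h = phi g" by blast
    then have "g \<in> G" unfolding pointwise_stabiliser_def by blast
    then show "h \<in> pointwise_stabiliser G' (F ` H)" using g phi_mem by blast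
  qed
qed

lemma isotropy_image: "isotropy G' (F v) = phi ` isotropy G v"
  using pointwise_stabiliser_image[of "{v}"] by (simp add: isotropy_eq_pointwise_stabiliser)

lemma phi_image_conjugate:
  assumes "g \<in> G" "K \<subseteq> G"
  shows "phi ` (\<lambda>A. g ** A ** matrix_inv g) ` K = (\<lambda>A. phi g ** A ** matrix_inv (phi g)) ` phi ` K"
  unfolding image_image using assms phi_conjugate by (intro image_cong) auto

lemma conjugate_in_image:
  assumes K: "K \<subseteq> G" and L: "L \<subseteq> G"
  shows "conjugate_in G' (phi ` K) (phi ` L) \<longleftrightarrow> conjugate_in G K L"
proof
  assume "conjugate_in G' (phi ` K) (phi ` L)"
  then obtain h where "h \<in> G'" and L': "phi ` L = (\<lambda>A. h ** A ** matrix_inv h) ` phi ` K"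
    unfolding conjugate_in_def by blast
  then obtain g where g: "g \<in> G" "h = phi g" using phi_image by blast
  then have "phi ` L = phi ` (\<lambda>A. g ** A ** matrix_inv g) ` K"
    using L' phi_image_conjugate[OF g(1) K] by simp
  moreover have "(\<lambda>A. g ** A ** matrix_inv g) ` K \<subseteq> G"
    using g(1) K
    by (intro image_subsetI finite_linear_groupD(4,5)[OF group]) auto
  ultimately have "L = (\<lambda>A. g ** A ** matrix_inv g) ` K"
    by (simp add: inj_on_image_eq_iff[OF inj_on_phi L])
  then show "conjugate_in G K L" unfolding conjugate_in_def using g(1) by blast
next
  assume "conjugate_in G K L"
  then obtain g where g: "g \<in> G" "L = (\<lambda>A. g ** A ** matrix_inv g) ` K"
    unfolding conjugate_in_def by blast
  then have "phi ` L = (\<lambda>A. phi g ** A ** matrix_inv (phi g)) ` phi ` K"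
    using phi_image_conjugate[OF g(1) K] by simp
  then show "conjugate_in G' (phi ` K) (phi ` L)"
    unfolding conjugate_in_def using phi_in[OF g(1)] by blast
qed

lemma iso_type_set_image:
  assumes "K \<subseteq> G" shows "iso_type_set G' (phi ` K) = F ` iso_type_set G K"
proof (rule sym, rule F_image_eqI)
  fix v
  have "isotropy G v \<subseteq> G" unfolding isotropy_def by blast
  then show "F v \<in> iso_type_set G' (phi ` K) \<longleftrightarrow> v \<in> iso_type_set G K"
    unfolding iso_type_set_def mem_Collect_eq isotropy_image by (rule conjugate_in_image[OF assms])
qed

lemma induced_map_orbits: "induced_map F ` orbit G ` X = orbit G' ` F ` X"
  unfolding induced_map_def image_image using maps_orbits by simp

lemma induced_map_inverse: "induced_map F (induced_map (inv F) X) = X"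
  unfolding induced_map_def by (simp add: image_image)

lemma stratum_image: "K \<subseteq> G \<Longrightarrow> induced_map F ` stratum G K = stratum G' (phi ` K)"
  unfolding stratum_def induced_map_orbits by (simp add: iso_type_set_image)

lemma strata_image_subset: "(\<lambda>S. induced_map F ` S) ` strata G \<subseteq> strata G'"
proof
  fix S' assume "S' \<in> (\<lambda>S. induced_map F ` S) ` strata G"
  then obtain K where K: "K \<subseteq> G" "iso_type_set G K \<noteq> {}" "S' = induced_map F ` stratum G K"
    unfolding strata_def by blast
  then have "phi ` K \<subseteq> G'" "iso_type_set G' (phi ` K) \<noteq> {}" "S' = stratum G' (phi ` K)"
    using phi_in iso_type_set_image stratum_image by auto
  then show "S' \<in> strata G'" unfolding strata_def by blast
qed

lemma strata_image: "(\<lambda>S. induced_map F ` S) ` strata G = strata G'"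
proof
  interpret inverse: orbit_equivalence G' G "inv F" by (rule inverse)
  have "strata G' = (\<lambda>S. induced_map F ` S) ` (\<lambda>S. induced_map (inv F) ` S) ` strata G'"
    by (simp add: image_image induced_map_inverse)
  also have "\<dots> \<subseteq> (\<lambda>S. induced_map F ` S) ` strata G"
    by (intro image_mono inverse.strata_image_subset)
  finally show "strata G' \<subseteq> (\<lambda>S. induced_map F ` S) ` strata G" .
qed (rule strata_image_subset)

lemma fixed_space_image: "g \<in> G \<Longrightarrow> F ` {v. g *v v = v} = {w. phi g *v w = w}"
  by (rule F_image_eqI) (simp add: inj_eq[OF inj_F] flip: phi_intertwines)

text \<open>The derivative \<open>L\<close> of \<open>F\<close> at the common fixed point \<open>0\<close> is a complex linear
  isomorphism with \<open>L \<circ> g = phi g \<circ> L\<close>, so it carries fixed spaces to fixed spaces.\<close>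
lemma complex_hyperplane_fixed_space_image:
  assumes "g \<in> G" "complex_hyperplane {v. g *v v = v}"
  shows "complex_hyperplane {w. phi g *v w = w}"
proof -
  have holo: "holomorphic_map F" "holomorphic_map (inv F)"
    using diffeo unfolding holomorphic_diffeo_def by auto
  obtain L where L: "(F has_derivative L) (at 0)"
    using holomorphic_map_complex_derivative[OF holo(1)] by blast
  obtain L' where L': "(inv F has_derivative L') (at (F 0))" "Vector_Spaces.linear (*s) (*s) L'"
    using holomorphic_map_complex_derivative[OF holo(2)] by blast
  have L'_L: "L' (L v) = v" for v
    by (rule has_derivative_inv_cancel[OF bij_F L L'(1)])
  have L_L': "L (L' w) = w" for w
    using has_derivative_inv_cancel[OF bij_imp_bij_inv[OF bij_F] L'(1)] L
    by (simp add: inv_inv_eq[OF bij_F])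
  have L_intertwines: "L (g *v v) = phi g *v L v" for v
    by (rule has_derivative_intertwines[OF L matrix_vector_mul_bounded_linear
          matrix_vector_mul_bounded_linear phi_intertwines[OF assms(1)]])
  have "phi g *v w = w \<longleftrightarrow> g *v L' w = L' w" for w
    using L_intertwines[of "L' w"] L_L' L'_L by metis
  then have "{w. phi g *v w = w} = L' -` {v. g *v v = v}" by auto
  moreover have "surj L'" using L'_L by (metis surjI)
  ultimately show ?thesis using complex_hyperplane_vimage[OF assms(2) L'(2)] by simp
qed

lemma reflection_hyperplane_image:
  assumes "reflection_hyperplane G H" shows "reflection_hyperplane G' (F ` H)"
proof -
  obtain g where g: "complex_reflection G g" and H: "H = {v. g *v v = v}"
    using assms unfolding reflection_hyperplane_def by blast
  then have "g \<in> G" "g \<noteq> mat 1" "complex_hyperplane {v. g *v v = v}"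
    unfolding complex_reflection_def by auto
  moreover have "phi g \<noteq> mat 1"
    using inj_on_eq_iff[OF inj_on_phi \<open>g \<in> G\<close> finite_linear_groupD(2)[OF group]] \<open>g \<noteq> mat 1\<close>
    by (simp add: phi_one)
  ultimately have "complex_reflection G' (phi g)"
    unfolding complex_reflection_def by (simp add: phi_in complex_hyperplane_fixed_space_image)
  moreover have "F ` H = {w. phi g *v w = w}" unfolding H by (rule fixed_space_image[OF \<open>g \<in> G\<close>])
  ultimately show ?thesis unfolding reflection_hyperplane_def by blast
qed

lemma card_pointwise_stabiliser_image:
  "card (pointwise_stabiliser G' (F ` H)) = card (pointwise_stabiliser G H)"
proof -
  have "pointwise_stabiliser G H \<subseteq> G" unfolding pointwise_stabiliser_def by blast
  then show ?thesis
    unfolding pointwise_stabiliser_image by (rule card_image[OF inj_on_subset[OF inj_on_phi]])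
qed

lemma induced_map_left_inverse: "induced_map (inv F) (induced_map F X) = X"
  unfolding induced_map_def by (simp add: image_image)

lemma inj_induced_map: "inj (induced_map F)"
  by (rule inj_on_inverseI) (rule induced_map_left_inverse)

lemma reflection_divisor_image:
  "reflection_divisor G' (induced_map F ` S) = reflection_divisor G S"
proof (cases "\<exists>H. reflection_hyperplane G H \<and> S = orbit G ` H")
  case True
  then obtain H where H: "reflection_hyperplane G H" "S = orbit G ` H" by blast
  then have "induced_map F ` S = orbit G' ` F ` H" by (simp add: induced_map_orbits)
  then show ?thesis
    using reflection_divisor_orbits[OF group H(1)]
      reflection_divisor_orbits[OF group' reflection_hyperplane_image[OF H(1)]]
    by (simp add: H(2) card_pointwise_stabiliser_image)
next
  case False
  interpret inverse: orbit_equivalence G' G "inv F" by (rule inverse)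
  have "\<not> (\<exists>H'. reflection_hyperplane G' H' \<and> induced_map F ` S = orbit G' ` H')"
  proof
    assume "\<exists>H'. reflection_hyperplane G' H' \<and> induced_map F ` S = orbit G' ` H'"
    then obtain H' where H': "reflection_hyperplane G' H'" "induced_map F ` S = orbit G' ` H'"
      by blast
    have "S = induced_map (inv F) ` induced_map F ` S"
      by (simp add: image_image induced_map_left_inverse)
    also have "\<dots> = orbit G ` inv F ` H'" by (simp only: H'(2) inverse.induced_map_orbits)
    finally show False
      using False inverse.reflection_hyperplane_image[OF H'(1)] by blast
  qed
  then have "reflection_divisor G' (induced_map F ` S) = 0"
    unfolding reflection_divisor_def by (rule if_not_P)
  moreover have "reflection_divisor G S = 0"
    using False unfolding reflection_divisor_def by (rule if_not_P)
  ultimately show ?thesis by simp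
qed

lemma reflection_divisor_pushforward:
  "divisor_pushforward (induced_map F) (reflection_divisor G) = reflection_divisor G'"
proof
  fix S'
  have "S' = induced_map F ` induced_map (inv F) ` S'"
    by (simp add: image_image induced_map_inverse)
  then show "divisor_pushforward (induced_map F) (reflection_divisor G) S' = reflection_divisor G' S'"
    using divisor_pushforward_image[OF inj_induced_map] reflection_divisor_image by metis
qed

end

theorem corollary5p2:
  fixes G :: "(complex^'n^'n) set" and G' :: "(complex^'m^'m) set"
    and F :: "complex^'n \<Rightarrow> complex^'m"
  assumes "finite_linear_group G" and "finite_linear_group G'"
    and "holomorphic_diffeo F"
    and "\<forall>v. F ` orbit G v = orbit G' (F v)"
  shows "(\<lambda>S. induced_map F ` S) ` strata G = strata G'
     \<and> divisor_pushforward (induced_map F) (reflection_divisor G) = reflection_divisor G'"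
proof -
  interpret orbit_equivalence G G' F using assms by unfold_locales
  show ?thesis using strata_image reflection_divisor_pushforward by simp
qed

end
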